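(* In the binary model with $\lambda=g=\frac{\sqrt5-1}{2}$, the support $S$ of $\mu$ is almost surely totally disconnected.
   Context: Binary model. Let $T=\{1,2\}^*$ be the set of finite words over $\{1,2\}$ (the rooted binary tree; $v|j$ is the prefix of $v$ of length $j$). Let $\{a_v\}_{v\in T,\,|v|\ge1}$ be i.i.d. random variables with $\mathbb{P}(a_v=0)=\mathbb{P}(a_v=1)=\frac12$. Fix $\lambda\in(0,1)$. For $\omega\in\{1,2\}^{\mathbb{N}}$ put $f(\omega)=\sum_{j\ge1}a_{\omega|j}\lambda^j$. Let $\mu$ be the image under $f$ of the uniform product measure on $\{1,2\}^{\mathbb{N}}$, and $S=f(\{1,2\}^{\mathbb{N}})$ its (random, compact) support. *)

theory Defs
  imports "HOL-Probability.Probability"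
begin

text \<open>Vertices of the rooted binary tree \<open>{1,2}^*\<close> are encoded as \<open>bool list\<close>
  (False ~ 1, True ~ 2); infinite words \<open>{1,2}^\<nat>\<close> as \<open>nat \<Rightarrow> bool\<close>.\<close>

definition prefix_word :: "(nat \<Rightarrow> bool) \<Rightarrow> nat \<Rightarrow> bool list" where
  "prefix_word \<omega> j = map \<omega> [0..<j]"

definition coding_map :: "real \<Rightarrow> (bool list \<Rightarrow> real) \<Rightarrow> (nat \<Rightarrow> bool) \<Rightarrow> real" where
  "coding_map lam a \<omega> = (\<Sum>j. a (prefix_word \<omega> (Suc j)) * lam ^ Suc j)"

definition attractor :: "real \<Rightarrow> (bool list \<Rightarrow> real) \<Rightarrow> real set" where
  "attractor lam a = range (coding_map lam a)"

text \<open>The law of the i.i.d. labels: each \<open>a_v\<close> uniform on {0,1}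
  (the label of the root [] is also drawn but never used).\<close>
definition label_space :: "(bool list \<Rightarrow> real) measure" where
  "label_space = PiM UNIV (\<lambda>_. measure_pmf (pmf_of_set {0, 1}))"

definition totally_disconnected :: "'a::topological_space set \<Rightarrow> bool" where
  "totally_disconnected S \<longleftrightarrow> (\<forall>x\<in>S. connected_component_set S x = {x})"

end

theory Submission
  imports Defs
begin

text \<open>Since \<open>1/g = \<phi> = 1 + g\<close>, the coding map satisfies
  \<open>f(a, \<omega>) = g a(\<omega>|1) + g f(a', \<sigma>\<omega>)\<close>, where \<open>a'\<close> labels the subtree below \<open>\<omega>|1\<close>:
  descending one level maps a point \<open>x\<close> of \<open>S\<close> to \<open>\<phi> x - a(\<omega>|1)\<close>, again a point of the
  corresponding attractor, hence in \<open>[0, \<phi>]\<close>. This map preserves \<open>\<int>[\<phi>]\<close> and contracts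
  Galois conjugates by the factor \<open>g\<close>. So if a point of \<open>\<int>[\<phi>]\<close> lies in \<open>S\<close>, then below
  some vertex there is an infinite path along which the rescaled point only takes the four
  values \<open>0, g, 1, \<phi>\<close>. Following these values down the tree is a critical four-type
  branching process: its survival probabilities satisfy \<open>p(n+1) \<le> e(n) + p(n) - p(n)\<^sup>2/4\<close>
  with \<open>e(n) \<rightarrow> 0\<close>, so it dies out almost surely. Hence
  almost surely \<open>S\<close> misses the countable dense set \<open>\<int>[\<phi>]\<close>, and a subset of \<open>\<real>\<close> missing a
  dense set is totally disconnected.\<close>

section \<open>The label space\<close>

abbreviation coin :: "real measure" where
  "coin \<equiv> measure_pmf (pmf_of_set {0, 1})"

interpretation label_space: prob_space label_space
  unfolding label_space_def by (intro prob_space_PiM prob_space_measure_pmf)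

lemma space_label_space [simp]: "space label_space = UNIV"
  by (simp add: label_space_def space_PiM)

lemma events_Collect: "Measurable.pred label_space P \<Longrightarrow> {a. P a} \<in> label_space.events"
  by (simp add: pred_def)

lemma measurable_label [measurable]: "(\<lambda>a. a v) \<in> label_space \<rightarrow>\<^sub>M coin"
  unfolding label_space_def by (rule measurable_component_singleton) simp

lemma distr_label: "distr label_space coin (\<lambda>a. a v) = coin"
  unfolding label_space_def by (rule distr_PiM_component) (auto simp: prob_space_measure_pmf)

lemma prob_label: "label_space.prob {a. a v \<in> X} = measure coin X"
  using measure_distr[OF measurable_label, of X v] by (simp add: distr_label vimage_def)

lemma pred_label [measurable]: "Measurable.pred label_space (\<lambda>a. Q (a v))"
  by (rule measurable_compose[OF measurable_label]) (simp add: pred_def)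

definition subtree :: "bool list \<Rightarrow> (bool list \<Rightarrow> real) \<Rightarrow> bool list \<Rightarrow> real" where
  "subtree v a = (\<lambda>w. a (v @ w))"

lemma subtree_Nil [simp]: "subtree [] a = a"
  and subtree_subtree [simp]: "subtree v (subtree w a) = subtree (w @ v) a"
  by (simp_all add: subtree_def)

lemma measurable_subtree [measurable]: "subtree v \<in> label_space \<rightarrow>\<^sub>M label_space"
  unfolding subtree_def label_space_def
  by (rule measurable_PiM_single') (auto simp: space_PiM intro: measurable_component_singleton)

lemma distr_subtree: "distr label_space label_space (subtree v) = label_space"
proof -
  have "distr (PiM UNIV (\<lambda>_. coin)) (PiM UNIV (\<lambda>_. coin)) (\<lambda>a. \<lambda>w\<in>UNIV. a (v @ w)) =
        PiM UNIV (\<lambda>_. coin)"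
    using distr_PiM_reindex[of UNIV "\<lambda>_. coin" "\<lambda>w. v @ w" UNIV]
    by (simp add: prob_space_measure_pmf inj_on_def)
  moreover have "subtree v = (\<lambda>a. \<lambda>w\<in>UNIV. a (v @ w))"
    by (simp add: fun_eq_iff subtree_def)
  ultimately show ?thesis
    by (simp add: label_space_def)
qed

lemma prob_subtree:
  assumes "Measurable.pred label_space P"
  shows "label_space.prob {a. P (subtree v a)} = label_space.prob {a. P a}"
  using measure_distr[OF measurable_subtree, of "{a. P a}" v] assms
  by (simp add: distr_subtree pred_def vimage_def)

lemma indep_labels: "label_space.indep_vars (\<lambda>_. coin) (\<lambda>v a. a v) UNIV"
proof -
  have "(\<lambda>a. \<lambda>v\<in>UNIV. a v) = (\<lambda>a::bool list \<Rightarrow> real. a)"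
    by (simp add: fun_eq_iff)
  then show ?thesis
    by (subst label_space.indep_vars_iff_distr_eq_PiM')
       (auto simp: distr_label[unfolded label_space_def] label_space_def distr_id2)
qed

lemma prob_conj_disjoint_supports:
  assumes "A \<inter> B = {}"
    and P: "Measurable.pred label_space P" "\<And>a a'. (\<forall>v\<in>A. a v = a' v) \<Longrightarrow> P a = P a'"
    and Q: "Measurable.pred label_space Q" "\<And>a a'. (\<forall>v\<in>B. a v = a' v) \<Longrightarrow> Q a = Q a'"
  shows "label_space.prob {a. P a \<and> Q a} = label_space.prob {a. P a} * label_space.prob {a. Q a}"
proof -
  define extend :: "bool list set \<Rightarrow> (bool list \<Rightarrow> real) \<Rightarrow> bool list \<Rightarrow> real" where
    "extend C h v = (if v \<in> C then h v else 0)" for C h v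
  have extend_meas: "extend C \<in> PiM C (\<lambda>_. coin) \<rightarrow>\<^sub>M label_space" for C
    unfolding label_space_def
  proof (rule measurable_PiM_single')
    show "(\<lambda>h. extend C h v) \<in> PiM C (\<lambda>_. coin) \<rightarrow>\<^sub>M coin" for v
      by (cases "v \<in> C") (auto simp: extend_def intro: measurable_component_singleton)
  qed (auto simp: space_PiM)
  have P_extend: "P (extend A (restrict a A)) = P a" for a
    by (rule P(2)) (simp add: extend_def)
  have Q_extend: "Q (extend B (restrict a B)) = Q a" for a
    by (rule Q(2)) (simp add: extend_def)
  define X where "X = {h \<in> space (PiM A (\<lambda>_. coin)). P (extend A h)}"
  define Y where "Y = {h \<in> space (PiM B (\<lambda>_. coin)). Q (extend B h)}"
  have X: "X \<in> sets (PiM A (\<lambda>_. coin))" and Y: "Y \<in> sets (PiM B (\<lambda>_. coin))"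
    using measurable_compose[OF extend_meas P(1)] measurable_compose[OF extend_meas Q(1)]
    by (simp_all add: X_def Y_def pred_def)
  have "label_space.indep_var (PiM A (\<lambda>_. coin)) (\<lambda>a. restrict a A) (PiM B (\<lambda>_. coin)) (\<lambda>a. restrict a B)"
    using label_space.indep_var_restrict[OF indep_labels \<open>A \<inter> B = {}\<close>] by simp
  from label_space.indep_varD[OF this X Y]
  have "label_space.prob ((\<lambda>a. (restrict a A, restrict a B)) -` (X \<times> Y)) =
      label_space.prob ((\<lambda>a. restrict a A) -` X) * label_space.prob ((\<lambda>a. restrict a B) -` Y)"
    by simp
  moreover have "(\<lambda>a. (restrict a A, restrict a B)) -` (X \<times> Y) = {a. P a \<and> Q a}"
    "(\<lambda>a. restrict a A) -` X = {a. P a}" "(\<lambda>a. restrict a B) -` Y = {a. Q a}"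
    by (auto simp: X_def Y_def P_extend Q_extend space_PiM)
  ultimately show ?thesis
    by simp
qed

lemma prob_root_label: "label_space.prob {a. a [] = 1} = 1/2" "label_space.prob {a. a [] \<noteq> 1} = 1/2"
  using prob_label[of "[]" "{1}"] prob_label[of "[]" "-{1}"] by (auto simp: measure_pmf_of_set)

section \<open>Runs of a partial automaton down the labelled tree\<close>

fun survives :: "('s \<Rightarrow> bool \<Rightarrow> 's option) \<Rightarrow> 's \<Rightarrow> nat \<Rightarrow> (bool list \<Rightarrow> real) \<Rightarrow> bool" where
  "survives \<delta> s 0 a \<longleftrightarrow> True"
| "survives \<delta> s (Suc n) a \<longleftrightarrow>
     (\<exists>b s'. \<delta> s (a [b] = 1) = Some s' \<and> survives \<delta> s' n (subtree [b] a))"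

definition child_survives :: "('s \<Rightarrow> bool \<Rightarrow> 's option) \<Rightarrow> 's \<Rightarrow> nat \<Rightarrow> (bool list \<Rightarrow> real) \<Rightarrow> bool" where
  "child_survives \<delta> s n a \<longleftrightarrow> (\<exists>s'. \<delta> s (a [] = 1) = Some s' \<and> survives \<delta> s' n a)"

lemma survives_Suc_iff:
  "survives \<delta> s (Suc n) a \<longleftrightarrow>
     child_survives \<delta> s n (subtree [False] a) \<or> child_survives \<delta> s n (subtree [True] a)"
  by (auto simp: child_survives_def subtree_def ex_bool_eq)

lemma survives_ignores_root:
  assumes "\<forall>v. v \<noteq> [] \<longrightarrow> a v = a' v"
  shows "survives \<delta> s n a = survives \<delta> s n a'"
proof (cases n)
  case (Suc m)
  have "subtree [b] a = subtree [b] a'" for b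
    using assms by (simp add: subtree_def fun_eq_iff)
  then show ?thesis
    using assms by (simp add: Suc)
qed simp

lemma measurable_survives [measurable]:
  fixes \<delta> :: "'s::countable \<Rightarrow> bool \<Rightarrow> 's option"
  shows "Measurable.pred label_space (survives \<delta> s n)"
proof (induction n arbitrary: s)
  case (Suc n)
  have [measurable]: "Measurable.pred label_space (\<lambda>a. survives \<delta> s' n (subtree [b] a))" for s' b
    using measurable_compose[OF measurable_subtree Suc.IH] .
  show ?case
    by simp
qed (simp add: pred_def del: space_label_space)

lemma measurable_child_survives [measurable]:
  fixes \<delta> :: "'s::countable \<Rightarrow> bool \<Rightarrow> 's option"
  shows "Measurable.pred label_space (child_survives \<delta> s n)"
  unfolding child_survives_def by simp

lemma prob_child_survives:
  fixes \<delta> :: "'s::countable \<Rightarrow> bool \<Rightarrow> 's option" and s :: 's and n :: nat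
  defines "q c \<equiv> label_space.prob {a. \<exists>s'. \<delta> s c = Some s' \<and> survives \<delta> s' n a}"
  shows "label_space.prob {a. child_survives \<delta> s n a} = (q True + q False) / 2"
proof -
  define E where "E c a \<longleftrightarrow> (\<exists>s'. \<delta> s c = Some s' \<and> survives \<delta> s' n a)" for c a
  have E_ignores_root: "E c a = E c a'" if "\<forall>v\<in>-{[]}. a v = a' v" for c a a'
  proof -
    have "survives \<delta> s' n a = survives \<delta> s' n a'" for s'
      using that by (intro survives_ignores_root) auto
    then show ?thesis
      by (simp add: E_def)
  qed
  have [measurable]: "Measurable.pred label_space (E c)" for c
    unfolding E_def by simp
  have root_indep: "label_space.prob {a. R (a []) \<and> E c a} = 1/2 * q c"
    if "label_space.prob {a. R (a [])} = 1/2" for R c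
  proof -
    have "label_space.prob {a. R (a []) \<and> E c a} = label_space.prob {a. R (a [])} * label_space.prob {a. E c a}"
      by (rule prob_conj_disjoint_supports[of "{[]}" "-{[]}", OF _ _ _ _ E_ignores_root]) auto
    then show ?thesis
      using that by (simp add: q_def E_def)
  qed
  have "child_survives \<delta> s n a \<longleftrightarrow> a [] = 1 \<and> E True a \<or> a [] \<noteq> 1 \<and> E False a" for a
    by (cases "a [] = 1") (simp_all add: child_survives_def E_def)
  then have "{a. child_survives \<delta> s n a} = {a. a [] = 1 \<and> E True a} \<union> {a. a [] \<noteq> 1 \<and> E False a}"
    by auto
  also have "label_space.prob \<dots> =
      label_space.prob {a. a [] = 1 \<and> E True a} + label_space.prob {a. a [] \<noteq> 1 \<and> E False a}"
    by (rule label_space.finite_measure_Union) (auto intro!: events_Collect)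
  finally show ?thesis
    using root_indep[OF prob_root_label(1)] root_indep[OF prob_root_label(2)] by simp
qed

lemma prob_survives_Suc:
  fixes \<delta> :: "'s::countable \<Rightarrow> bool \<Rightarrow> 's option"
  shows "label_space.prob {a. survives \<delta> s (Suc n) a} =
           1 - (1 - label_space.prob {a. child_survives \<delta> s n a})\<^sup>2"
proof -
  define D where "D b a \<longleftrightarrow> \<not> child_survives \<delta> s n (subtree [b] a)" for b a
  have [measurable]: "Measurable.pred label_space (D b)" for b
    unfolding D_def by (intro pred_intros_logic measurable_compose[OF measurable_subtree]) simp
  have D_local: "D b a = D b a'" if "\<forall>v\<in>range (Cons b). a v = a' v" for b a a'
  proof -
    have "subtree [b] a = subtree [b] a'"
      using that by (auto simp: subtree_def)
    then show ?thesis
      by (simp add: D_def)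
  qed
  have "label_space.prob {a. D False a \<and> D True a} = label_space.prob {a. D False a} * label_space.prob {a. D True a}"
    by (rule prob_conj_disjoint_supports[of "range (Cons False)" "range (Cons True)", OF _ _ D_local _ D_local]) auto
  moreover have "label_space.prob {a. D b a} = 1 - label_space.prob {a. child_survives \<delta> s n a}" for b
  proof -
    have "label_space.prob {a. D b a} = label_space.prob {a. \<not> child_survives \<delta> s n a}"
      unfolding D_def by (rule prob_subtree) simp
    then show ?thesis
      using label_space.prob_compl[OF events_Collect[OF measurable_child_survives]]
      by (simp add: Compl_eq_Diff_UNIV[symmetric] Collect_neg_eq)
  qed
  moreover have "{a. survives \<delta> s (Suc n) a} = UNIV - {a. D False a \<and> D True a}"
    by (auto simp: D_def survives_Suc_iff simp del: survives.simps(2))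
  ultimately show ?thesis
    using label_space.prob_compl[OF events_Collect, of "\<lambda>a. D False a \<and> D True a"]
    by (simp add: power2_eq_square)
qed

lemma AE_no_eternal_survivor:
  fixes \<delta> :: "'s::countable \<Rightarrow> bool \<Rightarrow> 's option"
  assumes "\<And>s. (\<lambda>n. label_space.prob {a. survives \<delta> s n a}) \<longlonglongrightarrow> 0"
  shows "AE a in label_space. \<forall>v s. \<exists>n. \<not> survives \<delta> s n (subtree v a)"
proof -
  have "AE a in label_space. a \<notin> {a. \<forall>n. survives \<delta> s n (subtree v a)}" for v s
  proof -
    define N where "N = {a. \<forall>n. survives \<delta> s n (subtree v a)}"
    have [measurable]: "Measurable.pred label_space (\<lambda>a. survives \<delta> s n (subtree v a))" for n
      using measurable_compose[OF measurable_subtree measurable_survives] .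
    have N: "N \<in> label_space.events"
      unfolding N_def by (rule events_Collect) simp
    have "label_space.prob N \<le> label_space.prob {a. survives \<delta> s n a}" for n
    proof -
      have "label_space.prob N \<le> label_space.prob {a. survives \<delta> s n (subtree v a)}"
        using N by (intro label_space.finite_measure_mono events_Collect) (auto simp: N_def)
      then show ?thesis
        by (simp add: prob_subtree)
    qed
    then have "label_space.prob N \<le> 0"
      by (intro LIMSEQ_le_const[OF assms]) auto
    then have "label_space.prob N = 0"
      using measure_nonneg[of label_space N] by linarith
    then show ?thesis
      using label_space.prob_eq_0[OF N] by (simp add: N_def)
  qed
  then show ?thesis
    by (simp add: AE_all_countable)
qed

section \<open>A perturbed quadratic recursion\<close>

lemma exists_below_of_uniform_decrease:
  fixes w :: "nat \<Rightarrow> real"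
  assumes "\<And>n. 0 \<le> w n" and "0 < c"
    and decrease: "\<And>n. N \<le> n \<Longrightarrow> d \<le> w n \<Longrightarrow> w (Suc n) \<le> w n - c"
  shows "\<exists>n\<ge>N. w n < d"
proof (rule ccontr)
  assume "\<not> (\<exists>n\<ge>N. w n < d)"
  then have above: "d \<le> w n" if "N \<le> n" for n
    using that by force
  have "w (N + k) \<le> w N - real k * c" for k
  proof (induction k)
    case (Suc k)
    then show ?case
      using decrease[OF _ above, of "N + k"] by (simp add: algebra_simps)
  qed simp
  moreover obtain k :: nat where "w N < real k * c"
    using reals_Archimedean3[OF \<open>0 < c\<close>] by blast
  ultimately show False
    using assms(1)[of "N + k"] by (smt (verit))
qed

lemma bounded_after_of_trap:
  fixes w :: "nat \<Rightarrow> real"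
  assumes "0 \<le> d" "w n0 < d"
    and enter: "\<And>n. n0 \<le> n \<Longrightarrow> w n < d \<Longrightarrow> w (Suc n) < 2 * d"
    and stay: "\<And>n. n0 \<le> n \<Longrightarrow> d \<le> w n \<Longrightarrow> w (Suc n) \<le> w n"
  shows "w (n0 + k) < 2 * d"
proof (induction k)
  case 0
  show ?case
    using \<open>0 \<le> d\<close> \<open>w n0 < d\<close> by simp
next
  case (Suc k)
  show ?case
    using Suc.IH enter[of "n0 + k"] stay[of "n0 + k"] by (cases "w (n0 + k) < d") auto
qed

lemma tendsto_zero_of_perturbed_quadratic_decrease:
  fixes w e :: "nat \<Rightarrow> real"
  assumes nonneg: "\<And>n. 0 \<le> w n" and "e \<longlonglongrightarrow> 0"
    and rec: "\<And>n. w (Suc n) \<le> e n + w n - (w n)\<^sup>2 / 4"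
  shows "w \<longlonglongrightarrow> 0"
proof (rule LIMSEQ_I)
  fix r :: real
  assume "0 < r"
  define d where "d = min r 1 / 2"
  have d: "0 < d" "d \<le> 1/2" "2 * d \<le> r"
    using \<open>0 < r\<close> by (auto simp: d_def)
  then obtain N where N: "\<And>n. N \<le> n \<Longrightarrow> e n < d\<^sup>2 / 8"
    using LIMSEQ_D[OF \<open>e \<longlonglongrightarrow> 0\<close>, of "d\<^sup>2 / 8"] by force
  have big: "w (Suc n) \<le> w n - d\<^sup>2 / 8" if "N \<le> n" "d \<le> w n" for n
  proof -
    have "d\<^sup>2 \<le> (w n)\<^sup>2"
      using that d by (intro power_mono) auto
    then show ?thesis
      using rec[of n] N[OF that(1)] by linarith
  qed
  have small: "w (Suc n) < 2 * d" if "N \<le> n" "w n < d" for n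
  proof -
    have "d\<^sup>2 / 8 \<le> d" "0 \<le> (w n)\<^sup>2 / 4"
      using d by (simp_all add: power2_eq_square)
    then show ?thesis
      using rec[of n] N[OF that(1)] that(2) by linarith
  qed
  obtain n0 where n0: "N \<le> n0" "w n0 < d"
    using exists_below_of_uniform_decrease[of w "d\<^sup>2 / 8" N d] nonneg big d by auto
  have "w (n0 + k) < 2 * d" for k
  proof (rule bounded_after_of_trap[OF _ n0(2) small])
    show "w (Suc n) \<le> w n" if "n0 \<le> n" "d \<le> w n" for n
      using big[of n] that n0(1) zero_le_power2[of d] by linarith
  qed (use n0 d in simp_all)
  then have "\<forall>n\<ge>n0. norm (w n - 0) < r"
    using nonneg d(3) by (auto simp: le_iff_add intro: order.strict_trans2)
  then show "\<exists>n0. \<forall>n\<ge>n0. norm (w n - 0) < r" ..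
qed

lemma quadratic_step_bound:
  fixes x y w :: real
  assumes "0 \<le> x" "0 \<le> y" "y \<le> w" "w \<le> 1"
  shows "1 - (1 - (x + y) / 2)\<^sup>2 \<le> x + (w - w\<^sup>2 / 4)"
proof -
  have "1 - (1 - (x + y) / 2)\<^sup>2 = (x + y) - (x + y)\<^sup>2 / 4"
    by (simp add: power2_eq_square field_simps)
  also have "\<dots> \<le> x + (y - y\<^sup>2 / 4)"
    using assms by (simp add: power2_eq_square field_simps)
  also have "y - y\<^sup>2 / 4 \<le> w - w\<^sup>2 / 4"
  proof -
    have "0 \<le> (w - y) * (1 - (w + y) / 4)"
      using assms by (intro mult_nonneg_nonneg) auto
    then show ?thesis
      by (simp add: power2_eq_square field_simps)
  qed
  finally show ?thesis
    by simp
qed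

section \<open>Arithmetic in \<open>\<int>[\<phi>]\<close>\<close>

definition \<phi> :: real where
  "\<phi> = (1 + sqrt 5) / 2"

definition g :: real where
  "g = (sqrt 5 - 1) / 2"

lemma sqrt_5_bounds: "2.2 < sqrt 5" "sqrt 5 < 2.3"
proof -
  show "2.2 < sqrt 5"
    by (rule real_less_rsqrt) (simp add: power2_eq_square)
  have "sqrt 5 < sqrt (2.3\<^sup>2)"
    by (rule real_sqrt_less_mono) (simp add: power2_eq_square)
  then show "sqrt 5 < 2.3"
    by simp
qed

lemma g_times_phi: "g * \<phi> = 1"
  and phi_eq: "\<phi> = 1 + g"
  and phi_sq: "\<phi> * \<phi> = \<phi> + 1"
  and g_sq: "g * g = 1 - g"
  and g_pos: "0 < g"
  and g_less_1: "g < 1"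
  and phi_bounds: "1.6 < \<phi>" "\<phi> < 1.7"
  using sqrt_5_bounds by (auto simp: g_def \<phi>_def field_simps)

definition zphi :: "int \<Rightarrow> int \<Rightarrow> real" where
  "zphi i j = of_int i + of_int j * \<phi>"

text \<open>The Galois conjugate of \<open>zphi i j\<close>: \<open>\<surd>5 \<mapsto> -\<surd>5\<close> sends \<open>\<phi>\<close> to \<open>-g\<close>.\<close>
definition zphi_conj :: "int \<Rightarrow> int \<Rightarrow> real" where
  "zphi_conj i j = of_int i - of_int j * g"

lemma phi_times_zphi: "\<phi> * zphi i j - of_int c = zphi (j - c) (i + j)"
  by (simp add: zphi_def algebra_simps mult.assoc[symmetric] phi_sq)

lemma zphi_conj_shift: "zphi_conj (j - c) (i + j) = - g * zphi_conj i j - of_int c"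
proof -
  have "zphi_conj (j - c) (i + j) - (- g * zphi_conj i j - of_int c) = of_int j * (1 - g - g * g)"
    by (simp add: zphi_conj_def algebra_simps)
  then show ?thesis
    by (simp add: g_sq)
qed

lemma g_power_in_zphi: "\<exists>i j. g ^ m = zphi i j"
proof (induction m)
  case 0
  have "g ^ 0 = zphi 1 0"
    by (simp add: zphi_def)
  then show ?case
    by blast
next
  case (Suc m)
  then obtain i j where "g ^ m = zphi i j"
    by blast
  then have "g ^ Suc m = zphi (j - i) i"
    by (simp add: zphi_def phi_eq algebra_simps mult.assoc[symmetric] g_sq)
  then show ?case
    by blast
qed

lemma zphi_dense:
  assumes "x < y"
  shows "\<exists>i j. x < zphi i j \<and> zphi i j < y"
proof -
  obtain m where m: "g ^ m < y - x"
    using real_arch_pow_inv[of "y - x" g] assms g_less_1 by auto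
  define d where "d = g ^ m"
  obtain i j where ij: "d = zphi i j"
    using g_power_in_zphi d_def by blast
  have "0 < d" "d < y - x"
    using g_pos m by (simp_all add: d_def)
  define k where "k = \<lfloor>x / d\<rfloor> + 1"
  have "x / d < of_int k" and k_le: "of_int k \<le> x / d + 1"
    unfolding k_def by linarith+
  then have "x < of_int k * d"
    using \<open>0 < d\<close> by (simp add: field_simps)
  moreover have "of_int k * d \<le> (x / d + 1) * d"
    using k_le \<open>0 < d\<close> by (intro mult_right_mono) auto
  moreover have "(x / d + 1) * d = x + d"
    using \<open>0 < d\<close> by (simp add: field_simps)
  ultimately have "x < of_int k * d" "of_int k * d < y"
    using \<open>d < y - x\<close> by linarith+
  moreover have "of_int k * d = zphi (k * i) (k * j)"
    using ij by (simp add: zphi_def algebra_simps)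
  ultimately show ?thesis
    by metis
qed

lemma zphi_conj_window_step:
  assumes "c = 0 \<or> c = 1" "0 \<le> e" "-\<phi> - e \<le> zphi_conj i j" "zphi_conj i j \<le> 1 + e"
  shows "-\<phi> - g * e \<le> zphi_conj (j - c) (i + j)" "zphi_conj (j - c) (i + j) \<le> 1 + g * e"
proof -
  have "g * zphi_conj i j \<le> g * (1 + e)" "g * (-\<phi> - e) \<le> g * zphi_conj i j"
    using assms(3,4) g_pos by (simp_all add: mult_left_mono)
  then show "-\<phi> - g * e \<le> zphi_conj (j - c) (i + j)" "zphi_conj (j - c) (i + j) \<le> 1 + g * e"
    using assms(1) g_times_phi phi_eq by (auto simp: zphi_conj_shift algebra_simps)
qed

section \<open>The four-state branching process\<close>

datatype gstate = Val0 | ValG | Val1 | ValPhi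

instance gstate :: countable
  by countable_datatype

fun gval :: "gstate \<Rightarrow> real" where
  "gval Val0 = 0"
| "gval ValG = g"
| "gval Val1 = 1"
| "gval ValPhi = \<phi>"

text \<open>State \<open>s\<close> stands for the point \<open>gval s\<close>; reading the label \<open>c\<close> moves to
  \<open>\<phi> * gval s - c\<close>, and the run dies when that point leaves \<open>[0, \<phi>]\<close>.\<close>
fun gstep :: "gstate \<Rightarrow> bool \<Rightarrow> gstate option" where
  "gstep Val0 c = (if c then None else Some Val0)"
| "gstep ValG c = Some (if c then Val0 else Val1)"
| "gstep Val1 c = Some (if c then ValG else ValPhi)"
| "gstep ValPhi c = (if c then Some ValPhi else None)"

lemma gstep_gval:
  assumes "c = 0 \<or> c = 1" "0 \<le> \<phi> * gval s - c" "\<phi> * gval s - c \<le> \<phi>"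
  shows "\<exists>s'. gstep s (c = 1) = Some s' \<and> gval s' = \<phi> * gval s - c"
  using assms phi_bounds g_times_phi phi_sq phi_eq by (cases s) (auto simp: mult.commute)

lemma zphi_eq_gval:
  assumes "0 \<le> zphi i j" "zphi i j \<le> \<phi>" "-\<phi> - 1/2 \<le> zphi_conj i j" "zphi_conj i j \<le> 3/2"
  shows "\<exists>s. zphi i j = gval s"
proof -
  have "of_int j * sqrt 5 = zphi i j - zphi_conj i j"
    by (simp add: zphi_def zphi_conj_def g_def \<phi>_def field_simps)
  then have "-2 < of_int j * sqrt 5" "of_int j * sqrt 5 < 4.4"
    using assms phi_bounds by linarith+
  moreover have "of_int j * sqrt 5 \<le> -1 * sqrt 5" if "j \<le> -1"
    using that by (intro mult_right_mono) auto
  moreover have "2 * sqrt 5 \<le> of_int j * sqrt 5" if "2 \<le> j"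
    using that by (intro mult_right_mono) auto
  ultimately have "j = 0 \<or> j = 1"
    using sqrt_5_bounds by fastforce
  then have "(j = 0 \<and> (i = 0 \<or> i = 1)) \<or> (j = 1 \<and> (i = -1 \<or> i = 0))"
    using assms(1,2) phi_bounds by (auto simp: zphi_def)
  then show ?thesis
    using phi_eq by (auto simp: zphi_def intro: exI[of _ Val0] exI[of _ Val1] exI[of _ ValG] exI[of _ ValPhi])
qed

definition golden_survival :: "gstate \<Rightarrow> nat \<Rightarrow> real" where
  "golden_survival s n = label_space.prob {a. survives gstep s n a}"

lemma golden_survival_Suc:
  "golden_survival Val0 (Suc n) = 1 - (1 - golden_survival Val0 n / 2)\<^sup>2"
  "golden_survival ValG (Suc n) = 1 - (1 - (golden_survival Val0 n + golden_survival Val1 n) / 2)\<^sup>2"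
  "golden_survival Val1 (Suc n) = 1 - (1 - (golden_survival ValG n + golden_survival ValPhi n) / 2)\<^sup>2"
  "golden_survival ValPhi (Suc n) = 1 - (1 - golden_survival ValPhi n / 2)\<^sup>2"
  by (simp_all add: golden_survival_def prob_survives_Suc prob_child_survives add.commute
      del: survives.simps(2))

lemma golden_survival_tendsto_zero: "(\<lambda>n. golden_survival s n) \<longlonglongrightarrow> 0"
proof -
  have bounds: "0 \<le> golden_survival s n" "golden_survival s n \<le> 1" for s n
    by (simp_all add: golden_survival_def)
  have quadratic: "1 - (1 - x / 2)\<^sup>2 = 0 + x - x\<^sup>2 / 4" for x :: real
    by (simp add: power2_eq_square field_simps)
  have Val0: "(\<lambda>n. golden_survival Val0 n) \<longlonglongrightarrow> 0"
    by (rule tendsto_zero_of_perturbed_quadratic_decrease[where e = "\<lambda>_. 0"])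
       (simp_all only: bounds golden_survival_Suc quadratic order_refl tendsto_const)
  have ValPhi: "(\<lambda>n. golden_survival ValPhi n) \<longlonglongrightarrow> 0"
    by (rule tendsto_zero_of_perturbed_quadratic_decrease[where e = "\<lambda>_. 0"])
       (simp_all only: bounds golden_survival_Suc quadratic order_refl tendsto_const)
  txt \<open>\<open>ValG\<close> and \<open>Val1\<close> feed each other; their maximum obeys the recursion perturbed by
    the vanishing survival probabilities of \<open>Val0\<close> and \<open>ValPhi\<close>.\<close>
  define w where "w n = max (golden_survival ValG n) (golden_survival Val1 n)" for n
  have w: "w \<longlonglongrightarrow> 0"
  proof (rule tendsto_zero_of_perturbed_quadratic_decrease)
    show "(\<lambda>n. golden_survival Val0 n + golden_survival ValPhi n) \<longlonglongrightarrow> 0"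
      using tendsto_add[OF Val0 ValPhi] by simp
    fix n
    show "0 \<le> w n"
      using bounds by (simp add: w_def le_max_iff_disj)
    have "golden_survival ValG (Suc n) \<le> golden_survival Val0 n + (w n - (w n)\<^sup>2 / 4)"
      unfolding golden_survival_Suc by (rule quadratic_step_bound) (auto simp: bounds w_def)
    moreover have "golden_survival Val1 (Suc n) \<le> golden_survival ValPhi n + (w n - (w n)\<^sup>2 / 4)"
      unfolding golden_survival_Suc add.commute[of "golden_survival ValG n"]
      by (rule quadratic_step_bound) (auto simp: bounds w_def)
    ultimately show "w (Suc n) \<le> golden_survival Val0 n + golden_survival ValPhi n + w n - (w n)\<^sup>2 / 4"
      using bounds[of Val0 n] bounds[of ValPhi n] by (simp add: w_def)
  qed
  have ValG_Val1: "(\<lambda>n. golden_survival s n) \<longlonglongrightarrow> 0" if "s \<in> {ValG, Val1}" for s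
    by (rule tendsto_sandwich[OF _ _ tendsto_const w]) (use that in \<open>auto simp: bounds w_def\<close>)
  show ?thesis
    using Val0 ValPhi ValG_Val1 by (cases s) simp_all
qed

section \<open>Points of \<open>\<int>[\<phi>]\<close> in the attractor\<close>

definition binary_labelling :: "(bool list \<Rightarrow> real) \<Rightarrow> bool" where
  "binary_labelling a \<longleftrightarrow> (\<forall>v. a v = 0 \<or> a v = 1)"

lemma binary_labelling_subtree: "binary_labelling a \<Longrightarrow> binary_labelling (subtree v a)"
  by (simp add: binary_labelling_def subtree_def)

lemma AE_binary_labelling: "AE a in label_space. binary_labelling a"
proof -
  have "AE a in label_space. a v = 0 \<or> a v = 1" for v
  proof -
    have "label_space.prob {a. a v \<in> {0, 1}} = 1"
      unfolding prob_label by (simp add: measure_pmf_of_set)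
    from label_space.AE_prob_1[OF this] show ?thesis
      by simp
  qed
  then show ?thesis
    by (simp add: binary_labelling_def AE_all_countable)
qed

lemma prefix_word_Suc: "prefix_word \<omega> (Suc n) = \<omega> 0 # prefix_word (\<lambda>k. \<omega> (Suc k)) n"
  by (simp add: prefix_word_def upt_conv_Cons map_Suc_upt[symmetric] del: upt_Suc)

lemma summable_coding_series:
  assumes "0 \<le> lam" "lam < 1" "binary_labelling a"
  shows "summable (\<lambda>j. a (prefix_word \<omega> (Suc j)) * lam ^ Suc j)"
proof (rule summable_comparison_test')
  show "summable (\<lambda>j. lam ^ Suc j)"
    using assms(1,2) by simp
  show "norm (a (prefix_word \<omega> (Suc j)) * lam ^ Suc j) \<le> lam ^ Suc j" for j
    using assms(1,3) by (auto simp: binary_labelling_def abs_mult dest: spec[of _ "prefix_word \<omega> (Suc j)"])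
qed

lemma coding_map_bounds:
  assumes "0 \<le> lam" "lam < 1" "binary_labelling a"
  shows "0 \<le> coding_map lam a \<omega>" "coding_map lam a \<omega> \<le> lam / (1 - lam)"
proof -
  have term_bounds: "0 \<le> a (prefix_word \<omega> (Suc j)) * lam ^ Suc j"
      "a (prefix_word \<omega> (Suc j)) * lam ^ Suc j \<le> lam ^ Suc j" for j
    using assms(1,3) by (auto simp: binary_labelling_def dest: spec[of _ "prefix_word \<omega> (Suc j)"])
  have "(\<lambda>j. lam ^ Suc j) sums (lam / (1 - lam))"
    using sums_mult[OF geometric_sums, of lam lam] assms(1,2) by simp
  then have geometric: "summable (\<lambda>j. lam ^ Suc j)" "(\<Sum>j. lam ^ Suc j) = lam / (1 - lam)"
    by (simp_all add: sums_summable sums_unique[symmetric] del: power_Suc)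
  show "0 \<le> coding_map lam a \<omega>"
    unfolding coding_map_def by (rule suminf_nonneg[OF summable_coding_series[OF assms] term_bounds(1)])
  show "coding_map lam a \<omega> \<le> lam / (1 - lam)"
    unfolding coding_map_def geometric(2)[symmetric]
    by (rule suminf_le[OF term_bounds(2) summable_coding_series[OF assms] geometric(1)])
qed

lemma coding_map_unfold:
  assumes "0 \<le> lam" "lam < 1" "binary_labelling a"
  shows "coding_map lam a \<omega> =
    lam * a [\<omega> 0] + lam * coding_map lam (subtree [\<omega> 0] a) (\<lambda>k. \<omega> (Suc k))"
proof -
  define f where "f = (\<lambda>j. a (prefix_word \<omega> (Suc j)) * lam ^ Suc j)"
  have "summable f"
    unfolding f_def by (rule summable_coding_series[OF assms])
  have "f (Suc j) = lam * (subtree [\<omega> 0] a (prefix_word (\<lambda>k. \<omega> (Suc k)) (Suc j)) * lam ^ Suc j)" for j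
    by (simp add: f_def prefix_word_Suc[of _ "Suc j"] subtree_def)
  then have "(\<Sum>j. f (Suc j)) = lam * coding_map lam (subtree [\<omega> 0] a) (\<lambda>k. \<omega> (Suc k))"
    unfolding coding_map_def
    using suminf_mult[OF summable_coding_series[OF assms(1,2) binary_labelling_subtree[OF assms(3)]]]
    by simp
  moreover have "coding_map lam a \<omega> = f 0 + (\<Sum>j. f (Suc j))"
    using suminf_split_head[OF \<open>summable f\<close>] by (simp add: coding_map_def f_def)
  ultimately show ?thesis
    by (simp add: f_def prefix_word_def)
qed

lemma coding_map_g_bounds:
  assumes "binary_labelling a"
  shows "0 \<le> coding_map g a \<omega>" "coding_map g a \<omega> \<le> \<phi>"
proof -
  have "1 - g = g * g"
    using g_sq by simp
  then have "g / (1 - g) = 1 / g"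
    using g_pos by simp
  also have "\<dots> = \<phi>"
    using g_times_phi g_pos by (simp add: field_simps)
  finally have "g / (1 - g) = \<phi>" .
  then show "0 \<le> coding_map g a \<omega>" "coding_map g a \<omega> \<le> \<phi>"
    using coding_map_bounds[OF less_imp_le[OF g_pos] g_less_1 assms] by simp_all
qed

lemma coding_map_g_subtree:
  assumes "binary_labelling a"
  shows "coding_map g (subtree [\<omega> 0] a) (\<lambda>k. \<omega> (Suc k)) = \<phi> * coding_map g a \<omega> - a [\<omega> 0]"
proof -
  have "\<phi> * coding_map g a \<omega> =
      (g * \<phi>) * a [\<omega> 0] + (g * \<phi>) * coding_map g (subtree [\<omega> 0] a) (\<lambda>k. \<omega> (Suc k))"
    by (subst coding_map_unfold[OF less_imp_le[OF g_pos] g_less_1 assms]) (simp add: algebra_simps)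
  then show ?thesis
    by (simp add: g_times_phi)
qed

lemma survives_if_coding_map_eq_gval:
  assumes "binary_labelling a" "coding_map g a \<omega> = gval s"
  shows "survives gstep s n a"
  using assms
proof (induction n arbitrary: s a \<omega>)
  case (Suc n)
  define b where "b = \<omega> 0"
  define y where "y = coding_map g (subtree [b] a) (\<lambda>k. \<omega> (Suc k))"
  have binary: "binary_labelling (subtree [b] a)"
    using binary_labelling_subtree[OF Suc.prems(1)] .
  have "y = \<phi> * gval s - a [b]"
    using coding_map_g_subtree[OF Suc.prems(1)] Suc.prems(2) by (simp add: y_def b_def)
  moreover have "0 \<le> y" "y \<le> \<phi>"
    using coding_map_g_bounds[OF binary] by (simp_all add: y_def)
  moreover have "a [b] = 0 \<or> a [b] = 1"
    using Suc.prems(1) by (simp add: binary_labelling_def)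
  ultimately obtain s' where "gstep s (a [b] = 1) = Some s'" "gval s' = y"
    using gstep_gval by metis
  moreover have "survives gstep s' n (subtree [b] a)"
    using Suc.IH[OF binary] \<open>gval s' = y\<close> by (simp add: y_def)
  ultimately show ?case
    by auto
qed simp

lemma zphi_coding_descent:
  assumes "binary_labelling a" "coding_map g a \<omega> = zphi i j"
    and "0 \<le> e" "-\<phi> - e \<le> zphi_conj i j" "zphi_conj i j \<le> 1 + e"
  shows "\<exists>v i' j'. coding_map g (subtree v a) (\<lambda>k. \<omega> (k + n)) = zphi i' j' \<and>
           -\<phi> - g ^ n * e \<le> zphi_conj i' j' \<and> zphi_conj i' j' \<le> 1 + g ^ n * e"
  using assms
proof (induction n arbitrary: a \<omega> i j e)
  case 0
  then show ?case
    by (intro exI[of _ "[]"] exI[of _ i] exI[of _ j]) simp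
next
  case (Suc n)
  define c :: int where "c = (if a [\<omega> 0] = 1 then 1 else 0)"
  have c: "a [\<omega> 0] = of_int c" "c = 0 \<or> c = 1"
    using Suc.prems(1) by (auto simp: c_def binary_labelling_def)
  have "coding_map g (subtree [\<omega> 0] a) (\<lambda>k. \<omega> (Suc k)) = zphi (j - c) (i + j)"
    using coding_map_g_subtree[OF Suc.prems(1)] Suc.prems(2) c(1) by (simp add: phi_times_zphi)
  from Suc.IH[OF binary_labelling_subtree[OF Suc.prems(1)] this _ zphi_conj_window_step[OF c(2) Suc.prems(3-5)]]
  obtain v i' j' where "coding_map g (subtree v (subtree [\<omega> 0] a)) (\<lambda>k. \<omega> (Suc (k + n))) = zphi i' j'"
    "-\<phi> - g ^ n * (g * e) \<le> zphi_conj i' j'" "zphi_conj i' j' \<le> 1 + g ^ n * (g * e)"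
    using g_pos Suc.prems(3) by auto
  then show ?case
    by (intro exI[of _ "\<omega> 0 # v"] exI[of _ i'] exI[of _ j']) (simp add: mult_ac)
qed

lemma survivor_if_zphi_in_attractor:
  assumes "binary_labelling a" "zphi i j \<in> attractor g a"
  shows "\<exists>v s. \<forall>n. survives gstep s n (subtree v a)"
proof -
  obtain \<omega> where \<omega>: "coding_map g a \<omega> = zphi i j"
    using assms(2) by (auto simp: attractor_def)
  define e where "e = \<bar>zphi_conj i j\<bar> + \<phi> + 1"
  have "0 < e"
    using phi_bounds by (simp add: e_def add_pos_nonneg)
  then obtain n where "g ^ n < 1 / (2 * e)"
    using real_arch_pow_inv[of "1 / (2 * e)" g] g_pos g_less_1 by auto
  then have small: "g ^ n * e \<le> 1/2"
    using \<open>0 < e\<close> by (simp add: field_simps)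
  have "-\<phi> - e \<le> zphi_conj i j" "zphi_conj i j \<le> 1 + e"
    using abs_ge_self[of "zphi_conj i j"] abs_ge_minus_self[of "zphi_conj i j"] phi_bounds
    unfolding e_def by linarith+
  then obtain v i' j' where v: "coding_map g (subtree v a) (\<lambda>k. \<omega> (k + n)) = zphi i' j'"
    "-\<phi> - g ^ n * e \<le> zphi_conj i' j'" "zphi_conj i' j' \<le> 1 + g ^ n * e"
    using zphi_coding_descent[OF assms(1) \<omega> less_imp_le[OF \<open>0 < e\<close>]] by blast
  have "0 \<le> zphi i' j'" "zphi i' j' \<le> \<phi>"
    using coding_map_g_bounds[OF binary_labelling_subtree[OF assms(1)]] v(1) by metis+
  moreover have "-\<phi> - 1/2 \<le> zphi_conj i' j'" "zphi_conj i' j' \<le> 3/2"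
    using v(2,3) small by linarith+
  ultimately obtain s where "zphi i' j' = gval s"
    using zphi_eq_gval by blast
  then show ?thesis
    using survives_if_coding_map_eq_gval[OF binary_labelling_subtree[OF assms(1)]] v(1) by metis
qed

lemma totally_disconnected_if_avoids_dense:
  fixes S D :: "real set"
  assumes dense: "\<And>x y. x < y \<Longrightarrow> \<exists>d\<in>D. x < d \<and> d < y" and "S \<inter> D = {}"
  shows "totally_disconnected S"
  unfolding totally_disconnected_def
proof
  fix x
  assume "x \<in> S"
  define C where "C = connected_component_set S x"
  have "y = x" if "y \<in> C" for y
  proof (rule ccontr)
    assume "y \<noteq> x"
    then have "min x y < max x y"
      by (cases "x \<le> y") auto
    then obtain d where d: "d \<in> D" "min x y < d" "d < max x y"
      using dense by blast
    have "is_interval C"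
      by (simp add: C_def is_interval_connected_1)
    then have between: "d \<in> C" if "u \<in> C" "w \<in> C" "u \<le> d" "d \<le> w" for u w
      using that unfolding is_interval_1 by blast
    have "x \<in> C"
      using \<open>x \<in> S\<close> by (simp add: C_def)
    then have "d \<in> C"
      using \<open>y \<in> C\<close> d by (cases "x \<le> y") (auto simp: min_def max_def intro: between)
    then show False
      using \<open>S \<inter> D = {}\<close> \<open>d \<in> D\<close> connected_component_subset by (auto simp: C_def)
  qed
  then show "connected_component_set S x = {x}"
    using \<open>x \<in> S\<close> by (auto simp: C_def)
qed

theorem corollary1p6:
  shows "AE a in label_space.
           totally_disconnected (attractor ((sqrt 5 - 1) / 2) a)"
proof -
  have "AE a in label_space. \<forall>v s. \<exists>n. \<not> survives gstep s n (subtree v a)"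
    using AE_no_eternal_survivor golden_survival_tendsto_zero unfolding golden_survival_def by blast
  with AE_binary_labelling show ?thesis
  proof eventually_elim
    case (elim a)
    have "zphi i j \<notin> attractor g a" for i j
      using elim survivor_if_zphi_in_attractor by meson
    then have "attractor g a \<inter> range (case_prod zphi) = {}"
      by auto
    moreover have "\<exists>d\<in>range (case_prod zphi). x < d \<and> d < y" if "x < y" for x y
      using zphi_dense[OF that] by auto
    ultimately show ?case
      unfolding g_def[symmetric] by (intro totally_disconnected_if_avoids_dense)
  qed
qed

end
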